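(* (a) For every $\lambda\in\mathbb C_+$, $b_\lambda$ is locally integrable near the identity $e$ of $G$. (b) If $\Im\lambda>\rho$, then $b_\lambda\in L^1(G//K)$. (c) For every $\lambda\in\mathbb C_+$, $b_\lambda$ is square integrable on the complement of any neighbourhood of $e$. (d) For every $\lambda\in\mathbb C_+$ there exists $p<2$ (depending on $\lambda$) such that $b_\lambda$ is in $L^p$ on the complement of any neighbourhood of $e$.
   Context: Let $G$ be a connected noncompact semisimple Lie group with finite centre and real rank one, $K$ a maximal compact subgroup, $\mathfrak a$ the one-dimensional maximal abelian subspace of $\mathfrak p$ in a Cartan decomposition $\mathfrak g=\mathfrak k+\mathfrak p$. Restricted roots $\pm\alpha$ and possibly $\pm2\alpha$; $m_1=\dim\mathfrak g_\alpha$, $m_2=\dim\mathfrak g_{2\alpha}$ (possibly $0$), $\rho=\frac12(m_1+2m_2)$; $H_0\in\mathfrak a$ with $\alpha(H_0)=1$, $a_t=\exp(tH_0)$. Each $x\in G$ is $x=k_1a_tk_2$, $k_i\in K$, with unique $t\ge0$; Haar measure is $\int_Gf(x)\,dx=\int_K\int_0^\infty\int_Kf(k_1a_tk_2)\Delta(t)\,dk_1\,dt\,dk_2$ with $\Delta(t)=(2\sinh t)^{m_1+m_2}(2\cosh t)^{m_2}$. $L^1(G//K)$ denotes the $K$-biinvariant integrable functions. $\mathbb C_+=\{\Im\lambda>0\}$. For $t>0$, $\Phi_\lambda(a_t)=(2\cosh t)^{i\lambda-\rho}\,{}_2F_1\big(\frac{\rho-i\lambda}{2},\frac{m_1+2}{4}-\frac{i\lambda}{2};1-i\lambda;\cosh^{-2}t\big)$,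 $c(\lambda)=\dfrac{2^{\rho-i\lambda}\Gamma(\frac{m_1+m_2+1}{2})\Gamma(i\lambda)}{\Gamma(\frac{\rho+i\lambda}{2})\Gamma(\frac{m_1+2}{4}+\frac{i\lambda}{2})}$, and for $\lambda\in\mathbb C_+$, $b_\lambda$ is the $K$-biinvariant function on $G\setminus K$ with $b_\lambda(a_t)=\frac{i}{2\lambda c(-\lambda)}\Phi_\lambda(a_t)$, $t>0$. *)

theory Defs
  imports "HOL-Analysis.Analysis"
begin

text \<open>Restricted root multiplicities (m1, m2) of a connected noncompact real rank one
semisimple Lie group with finite centre (classification: SO(n,1), SU(n,1), Sp(n,1), F4(-20)).\<close>
definition rank_one_mult :: "nat \<Rightarrow> nat \<Rightarrow> bool" where
  "rank_one_mult m1 m2 \<longleftrightarrow>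
     (m2 = 0 \<and> m1 \<ge> 1) \<or>
     (m2 = 1 \<and> even m1 \<and> m1 \<ge> 2) \<or>
     (m2 = 3 \<and> 4 dvd m1 \<and> m1 \<ge> 4) \<or>
     (m1 = 8 \<and> m2 = 7)"

definition rho :: "nat \<Rightarrow> nat \<Rightarrow> real" where
  "rho m1 m2 = (real m1 + 2 * real m2) / 2"

text \<open>Density of Haar measure in polar coordinates.\<close>
definition Delta :: "nat \<Rightarrow> nat \<Rightarrow> real \<Rightarrow> real" where
  "Delta m1 m2 t = (2 * sinh t) ^ (m1 + m2) * (2 * cosh t) ^ m2"

definition hyp2F1 :: "complex \<Rightarrow> complex \<Rightarrow> complex \<Rightarrow> complex \<Rightarrow> complex" where
  "hyp2F1 a b c z =
     (\<Sum>n. pochhammer a n * pochhammer b n / (pochhammer c n * fact n) * z ^ n)"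

definition Phi :: "nat \<Rightarrow> nat \<Rightarrow> complex \<Rightarrow> real \<Rightarrow> complex" where
  "Phi m1 m2 l t =
     (complex_of_real (2 * cosh t)) powr (\<i> * l - complex_of_real (rho m1 m2)) *
     hyp2F1 ((complex_of_real (rho m1 m2) - \<i> * l) / 2)
            (complex_of_real ((real m1 + 2) / 4) - \<i> * l / 2)
            (1 - \<i> * l)
            (complex_of_real (1 / (cosh t)\<^sup>2))"

definition cfun :: "nat \<Rightarrow> nat \<Rightarrow> complex \<Rightarrow> complex" where
  "cfun m1 m2 l =
     (2 :: complex) powr (complex_of_real (rho m1 m2) - \<i> * l) *
     Gamma (complex_of_real ((real m1 + real m2 + 1) / 2)) * Gamma (\<i> * l) /
     (Gamma ((complex_of_real (rho m1 m2) + \<i> * l) / 2) *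
      Gamma (complex_of_real ((real m1 + 2) / 4) + \<i> * l / 2))"

text \<open>Radial part of b_lambda: b_lambda(a_t), t > 0.\<close>
definition b_rad :: "nat \<Rightarrow> nat \<Rightarrow> complex \<Rightarrow> real \<Rightarrow> complex" where
  "b_rad m1 m2 l t = \<i> / (2 * l * cfun m1 m2 (- l)) * Phi m1 m2 l t"

end

theory Submission
  imports Defs "HOL-Real_Asymp.Real_Asymp" "HOL-Probability.Sinc_Integral"
begin

text \<open>Up to a constant, \<open>b\<^sub>\<lambda>(a\<^sub>t) = (2 cosh t)\<^bsup>i\<lambda>-\<rho>\<^esup> F(1/cosh\<^sup>2 t)\<close> with a Gauss series \<open>F\<close>
  whose parameters satisfy \<open>a + b - c = (m\<^sub>1 + m\<^sub>2 - 1)/2\<close>. Comparing the ratios of consecutive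
  Taylor coefficients shows that they are dominated by those of \<open>(1 - z)\<^bsup>-(m\<^sub>1+m\<^sub>2)/2\<^esup>\<close>, hence
  \<open>|F(1/cosh\<^sup>2 t)| \<le> C coth\<^bsup>m\<^sub>1+m\<^sub>2\<^esup> t\<close>. As \<open>\<Delta>(t) = (2 cosh t)\<^bsup>2\<rho>\<^esup> tanh\<^bsup>m\<^sub>1+m\<^sub>2\<^esup> t\<close>, the coth factor
  cancels against \<open>\<Delta>\<close>: \<open>\<Delta>|b\<^sub>\<lambda>| \<le> K (2 cosh t)\<^bsup>\<rho> - Im \<lambda>\<^esup>\<close> for all \<open>t > 0\<close>, and
  \<open>\<Delta>|b\<^sub>\<lambda>|\<^sup>p \<le> K (2 cosh t)\<^bsup>2\<rho> - p(\<rho> + Im \<lambda>)\<^esup>\<close> for \<open>t \<ge> \<epsilon>\<close>. All four claims follow by domination,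
  near \<open>0\<close> by a continuous function on \<open>[0, 1]\<close> and elsewhere by a decaying exponential;
  in (d) one takes \<open>p = 1 + \<rho>/(\<rho> + Im \<lambda>)\<close>.\<close>

definition hyp2F1_coeff :: "complex \<Rightarrow> complex \<Rightarrow> complex \<Rightarrow> nat \<Rightarrow> complex" where
  "hyp2F1_coeff a b c n = pochhammer a n * pochhammer b n / (pochhammer c n * fact n)"

lemma hyp2F1_eq_suminf: "hyp2F1 a b c z = (\<Sum>n. hyp2F1_coeff a b c n * z ^ n)"
  by (simp add: hyp2F1_def hyp2F1_coeff_def)

lemma hyp2F1_coeff_Suc:
  assumes "\<And>k. c + of_nat k \<noteq> 0"
  shows "hyp2F1_coeff a b c (Suc n) =
           hyp2F1_coeff a b c n * ((a + of_nat n) * (b + of_nat n) / ((c + of_nat n) * of_nat (Suc n)))"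
proof -
  have "pochhammer c n \<noteq> 0"
    unfolding pochhammer_eq_0_iff eq_neg_iff_add_eq_0 using assms by blast
  with assms[of n] show ?thesis
    by (simp add: hyp2F1_coeff_def pochhammer_Suc field_simps)
qed

lemma le_const_mult_if_eventually_ratio_le:
  fixes u d :: "nat \<Rightarrow> real"
  assumes d: "\<And>n. d n > 0"
    and ratio: "eventually (\<lambda>n. u (Suc n) * d n \<le> u n * d (Suc n)) sequentially"
  shows "\<exists>C\<ge>0. \<forall>n. u n \<le> C * d n"
proof -
  obtain N where N: "\<And>n. n \<ge> N \<Longrightarrow> u (Suc n) * d n \<le> u n * d (Suc n)"
    using ratio by (auto simp: eventually_sequentially)
  define C where "C = max 0 (Max ((\<lambda>k. u k / d k) ` {..N}))"
  have quotient_le: "u n / d n \<le> C" for n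
  proof (induction n)
    case 0
    show ?case unfolding C_def by (rule max.coboundedI2, rule Max_ge) auto
  next
    case (Suc n)
    show ?case
    proof (cases "Suc n \<le> N")
      case True
      then show ?thesis unfolding C_def by (intro max.coboundedI2 Max_ge) auto
    next
      case False
      then have "u (Suc n) / d (Suc n) \<le> u n / d n"
        using N[of n] d[of n] d[of "Suc n"] by (simp add: field_simps)
      with Suc.IH show ?thesis by linarith
    qed
  qed
  have "u n \<le> C * d n" for n
    using quotient_le[of n] d[of n] by (simp add: pos_divide_le_eq)
  then show ?thesis by (intro exI[of _ C]) (auto simp: C_def)
qed

lemma norm_hyp2F1_coeff_le:
  assumes c: "\<And>k. c + of_nat k \<noteq> 0" and s: "s > 0"
    and ratio: "eventually (\<lambda>n. norm (a + of_nat n) * norm (b + of_nat n)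
                                 \<le> (s + real n) * norm (c + of_nat n)) sequentially"
  shows "\<exists>C\<ge>0. \<forall>n. norm (hyp2F1_coeff a b c n) \<le> C * (pochhammer s n / fact n)"
proof (rule le_const_mult_if_eventually_ratio_le)
  show "pochhammer s n / fact n > 0" for n
    using s by (simp add: pochhammer_pos)
  show "eventually (\<lambda>n. norm (hyp2F1_coeff a b c (Suc n)) * (pochhammer s n / fact n)
          \<le> norm (hyp2F1_coeff a b c n) * (pochhammer s (Suc n) / fact (Suc n))) sequentially"
    using ratio
  proof eventually_elim
    case (elim n)
    have "norm (c + of_nat n) > 0" using c[of n] by simp
    with elim have "norm (a + of_nat n) * norm (b + of_nat n) / norm (c + of_nat n) \<le> s + real n"
      by (simp add: pos_divide_le_eq mult.commute)
    then have "norm (a + of_nat n) * norm (b + of_nat n) / (norm (c + of_nat n) * real (Suc n))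
                 \<le> (s + real n) / real (Suc n)"
      unfolding divide_divide_eq_left[symmetric] by (rule divide_right_mono) simp
    then have "norm (hyp2F1_coeff a b c n) *
                 (norm (a + of_nat n) * norm (b + of_nat n) / (norm (c + of_nat n) * real (Suc n)))
               \<le> norm (hyp2F1_coeff a b c n) * ((s + real n) / real (Suc n))"
      by (rule mult_left_mono) simp
    then have step: "norm (hyp2F1_coeff a b c (Suc n)) \<le> norm (hyp2F1_coeff a b c n) * ((s + real n) / real (Suc n))"
      by (simp only: hyp2F1_coeff_Suc[OF c] norm_mult norm_divide norm_of_nat)
    have binomial_step: "pochhammer s (Suc n) / fact (Suc n) = pochhammer s n / fact n * ((s + real n) / real (Suc n))"
      by (simp add: pochhammer_Suc field_simps del: of_nat_Suc)
    have "pochhammer s n / fact n \<ge> 0"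
      using s by (simp add: pochhammer_pos less_imp_le)
    with step have "norm (hyp2F1_coeff a b c (Suc n)) * (pochhammer s n / fact n)
        \<le> norm (hyp2F1_coeff a b c n) * ((s + real n) / real (Suc n)) * (pochhammer s n / fact n)"
      by (rule mult_right_mono)
    then show ?case
      unfolding binomial_step by (simp only: mult_ac)
  qed
qed

text \<open>The hypothesis on the real parts says that \<open>a + b - c = s - 1/2\<close>, so the cubic terms of the
  two quartics differ by \<open>n\<^sup>3\<close>.\<close>
lemma eventually_norm_mult_le_norm_mult:
  fixes a b c :: complex and s :: real
  assumes im: "Im b = Im a" "Im c = 2 * Im a" and re: "Re a + Re b = s + Re c - 1/2"
  shows "eventually (\<lambda>n. norm (a + of_nat n) * norm (b + of_nat n)
                          \<le> (s + real n) * norm (c + of_nat n)) sequentially"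
proof -
  have quartic: "eventually (\<lambda>x. ((s + Re c - 1/2 - Re b + x)\<^sup>2 + r) * ((Re b + x)\<^sup>2 + r)
                          < (s + x)\<^sup>2 * ((Re c + x)\<^sup>2 + 4 * r)) at_top" for r
    by real_asymp
  have "eventually (\<lambda>x. s + x > 0) at_top"
    by real_asymp
  with quartic[of "(Im a)\<^sup>2"]
  have "eventually (\<lambda>n. ((Re a + real n)\<^sup>2 + (Im a)\<^sup>2) * ((Re b + real n)\<^sup>2 + (Im a)\<^sup>2)
               < (s + real n)\<^sup>2 * ((Re c + real n)\<^sup>2 + 4 * (Im a)\<^sup>2) \<and> s + real n > 0) sequentially"
    unfolding re[symmetric]
    by (intro eventually_compose_filterlim[OF _ filterlim_real_sequentially] eventually_conj)
       (simp_all add: algebra_simps)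
  then show ?thesis
  proof eventually_elim
    case (elim n)
    then have "(norm (a + of_nat n) * norm (b + of_nat n))\<^sup>2 \<le> ((s + real n) * norm (c + of_nat n))\<^sup>2"
      using im by (simp add: power_mult_distrib cmod_power2)
    then show ?case
      by (rule power2_le_imp_le) (use elim in simp)
  qed
qed

lemma sums_pochhammer_binomial:
  fixes s x :: real
  assumes "0 \<le> x" "x < 1"
  shows "(\<lambda>n. pochhammer s n / fact n * x ^ n) sums (1 - x) powr (-s)"
proof -
  have "(\<lambda>n. ((-s) gchoose n) * (-x) ^ n) sums (1 + (-x)) powr (-s)"
    by (rule gen_binomial_real) (use assms in simp)
  moreover have "((-s) gchoose n) * (-x) ^ n = pochhammer s n / fact n * x ^ n" for n
  proof -
    have "((-s) gchoose n) * (-x) ^ n = ((-1) ^ n * (-1) ^ n) * (pochhammer s n / fact n * x ^ n)"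
      by (simp only: gbinomial_pochhammer power_minus[of x] minus_minus times_divide_eq_right mult_ac)
    also have "(-1) ^ n * (-1) ^ n = (1::real)"
      by (simp flip: power_add)
    finally show ?thesis by simp
  qed
  ultimately show ?thesis by simp
qed

lemma
  assumes coeff: "\<And>n. norm (hyp2F1_coeff a b c n) \<le> C * (pochhammer s n / fact n)"
    and z: "norm z < 1"
  shows summable_norm_hyp2F1_series: "summable (\<lambda>n. norm (hyp2F1_coeff a b c n * z ^ n))"
    and norm_hyp2F1_le: "norm (hyp2F1 a b c z) \<le> C * (1 - norm z) powr (-s)"
proof -
  have majorant: "(\<lambda>n. C * (pochhammer s n / fact n * norm z ^ n)) sums (C * (1 - norm z) powr (-s))"
    by (intro sums_mult sums_pochhammer_binomial) (use z in auto)
  have le: "norm (hyp2F1_coeff a b c n * z ^ n) \<le> C * (pochhammer s n / fact n * norm z ^ n)" for n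
    using mult_right_mono[OF coeff[of n], of "norm z ^ n"] by (simp add: norm_mult norm_power mult_ac)
  show summable: "summable (\<lambda>n. norm (hyp2F1_coeff a b c n * z ^ n))"
    by (rule summable_comparison_test[OF _ sums_summable[OF majorant]]) (use le in auto)
  have "norm (hyp2F1 a b c z) \<le> (\<Sum>n. norm (hyp2F1_coeff a b c n * z ^ n))"
    unfolding hyp2F1_eq_suminf by (rule summable_norm[OF summable])
  also have "\<dots> \<le> C * (1 - norm z) powr (-s)"
    using suminf_le[OF le summable sums_summable[OF majorant]] sums_unique[OF majorant] by simp
  finally show "norm (hyp2F1 a b c z) \<le> C * (1 - norm z) powr (-s)" .
qed

lemma isCont_hyp2F1:
  assumes coeff: "\<And>n. norm (hyp2F1_coeff a b c n) \<le> C * (pochhammer s n / fact n)"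
    and z: "norm z < 1"
  shows "isCont (hyp2F1 a b c) z"
proof -
  define r where "r = complex_of_real ((1 + norm z) / 2)"
  have "norm r = (1 + norm z) / 2"
    unfolding r_def norm_of_real by simp
  with z have r: "norm r < 1" "norm z < norm r"
    by simp_all
  have "summable (\<lambda>n. hyp2F1_coeff a b c n * r ^ n)"
    by (rule summable_norm_cancel[OF summable_norm_hyp2F1_series[OF coeff r(1)]])
  from isCont_powser[OF this r(2)] show ?thesis
    unfolding hyp2F1_eq_suminf[abs_def] .
qed

lemma Delta_eq_cosh_powr_mult_tanh_power:
  "Delta m1 m2 t = (2 * cosh t) powr (2 * rho m1 m2) * tanh t ^ (m1 + m2)"
proof -
  have "2 * sinh t = 2 * cosh t * tanh t"
    by (simp add: tanh_def)
  then have "(2 * sinh t) ^ (m1 + m2) = (2 * cosh t) ^ (m1 + m2) * tanh t ^ (m1 + m2)"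
    by (simp only: power_mult_distrib)
  moreover have "(2 * cosh t) ^ (m1 + m2) * (2 * cosh t) ^ m2 = (2 * cosh t) powr (2 * rho m1 m2)"
  proof -
    have "2 * rho m1 m2 = real (m1 + m2 + m2)" by (simp add: rho_def)
    then have "(2 * cosh t) powr (2 * rho m1 m2) = (2 * cosh t) ^ (m1 + m2 + m2)"
      by (simp only: powr_realpow cosh_real_pos mult_pos_pos zero_less_numeral)
    then show ?thesis by (simp only: power_add)
  qed
  ultimately show ?thesis
    unfolding Delta_def by (simp only: mult_ac)
qed

lemma Delta_nonneg: "t \<ge> 0 \<Longrightarrow> Delta m1 m2 t \<ge> 0"
  unfolding Delta_def by simp

lemma Delta_le_cosh_powr:
  assumes "t \<ge> 0"
  shows "Delta m1 m2 t \<le> (2 * cosh t) powr (2 * rho m1 m2)"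
proof -
  have "tanh t ^ (m1 + m2) \<le> 1"
    using assms tanh_real_lt_1[of t] by (intro power_le_one) auto
  then show ?thesis
    unfolding Delta_eq_cosh_powr_mult_tanh_power by (simp add: mult_left_le)
qed

lemma continuous_on_Delta: "continuous_on S (Delta m1 m2)"
  unfolding Delta_def by (intro continuous_intros)

lemma one_minus_inverse_cosh_square: "1 - 1 / (cosh t)\<^sup>2 = (tanh t)\<^sup>2"
  for t :: real
  by (simp add: tanh_def power_divide sinh_square_eq diff_divide_distrib)

definition Phi_hyp2F1 :: "nat \<Rightarrow> nat \<Rightarrow> complex \<Rightarrow> real \<Rightarrow> complex" where
  "Phi_hyp2F1 m1 m2 l t =
     hyp2F1 ((complex_of_real (rho m1 m2) - \<i> * l) / 2)
            (complex_of_real ((real m1 + 2) / 4) - \<i> * l / 2) (1 - \<i> * l)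
            (complex_of_real (1 / (cosh t)\<^sup>2))"

lemma b_rad_eq:
  "b_rad m1 m2 l t = \<i> / (2 * l * cfun m1 m2 (- l)) *
     (complex_of_real (2 * cosh t) powr (\<i> * l - complex_of_real (rho m1 m2)) * Phi_hyp2F1 m1 m2 l t)"
  by (simp add: b_rad_def Phi_def Phi_hyp2F1_def)

lemma Phi_hyp2F1_coeff_le:
  assumes N: "m1 + m2 > 0" and l: "Im l > 0"
  shows "\<exists>C\<ge>0. \<forall>n. norm (hyp2F1_coeff ((complex_of_real (rho m1 m2) - \<i> * l) / 2)
                                     (complex_of_real ((real m1 + 2) / 4) - \<i> * l / 2) (1 - \<i> * l) n)
                    \<le> C * (pochhammer ((real m1 + real m2) / 2) n / fact n)"
proof (rule norm_hyp2F1_coeff_le)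
  show "1 - \<i> * l + of_nat k \<noteq> 0" for k
  proof
    assume "1 - \<i> * l + of_nat k = 0"
    then have "Re (1 - \<i> * l + of_nat k) = 0" by simp
    with l show False by simp
  qed
  show "(real m1 + real m2) / 2 > 0"
    using N by (metis half_gt_zero of_nat_0_less_iff of_nat_add)
qed (rule eventually_norm_mult_le_norm_mult; use l in \<open>simp add: rho_def field_simps\<close>)

lemma norm_inverse_cosh_square_less_1:
  assumes "t \<noteq> 0"
  shows "norm (complex_of_real (1 / (cosh t)\<^sup>2)) < 1"
proof -
  have "cosh t > 1"
    using assms cosh_real_nonneg_less_iff[of 0 "\<bar>t\<bar>"] by simp
  then show ?thesis
    unfolding norm_of_real by (simp add: one_less_power)
qed

lemma norm_Phi_hyp2F1_le:
  assumes N: "m1 + m2 > 0" and l: "Im l > 0"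
  shows "\<exists>C\<ge>0. \<forall>t>0. norm (Phi_hyp2F1 m1 m2 l t) \<le> C / tanh t ^ (m1 + m2)"
proof -
  obtain C where C: "C \<ge> 0" "\<And>n. norm (hyp2F1_coeff ((complex_of_real (rho m1 m2) - \<i> * l) / 2)
      (complex_of_real ((real m1 + 2) / 4) - \<i> * l / 2) (1 - \<i> * l) n)
        \<le> C * (pochhammer ((real m1 + real m2) / 2) n / fact n)"
    using Phi_hyp2F1_coeff_le[OF N l] by blast
  have "norm (Phi_hyp2F1 m1 m2 l t) \<le> C / tanh t ^ (m1 + m2)" if t: "t > 0" for t
  proof -
    have "norm (complex_of_real (1 / (cosh t)\<^sup>2)) = 1 / (cosh t)\<^sup>2"
      unfolding norm_of_real by simp
    then have "(1 - norm (complex_of_real (1 / (cosh t)\<^sup>2))) powr (- ((real m1 + real m2) / 2))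
          = ((tanh t)\<^sup>2) powr (- ((real m1 + real m2) / 2))"
      by (simp only: one_minus_inverse_cosh_square)
    also have "\<dots> = tanh t powr (2 * (- ((real m1 + real m2) / 2)))"
      unfolding powr_powr[symmetric] using t by simp
    also have "\<dots> = tanh t powr (- real (m1 + m2))"
      by (rule arg_cong[where f = "\<lambda>e. tanh t powr e"]) (simp add: field_simps)
    also have "\<dots> = 1 / tanh t ^ (m1 + m2)"
      unfolding powr_minus_divide using t by (simp only: powr_realpow tanh_real_pos_iff)
    finally have coth_power:
      "(1 - norm (complex_of_real (1 / (cosh t)\<^sup>2))) powr (- ((real m1 + real m2) / 2))
         = 1 / tanh t ^ (m1 + m2)" .
    have "t \<noteq> 0" using t by simp
    from norm_hyp2F1_le[OF C(2) norm_inverse_cosh_square_less_1[OF this]] show ?thesis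
      unfolding coth_power Phi_hyp2F1_def by simp
  qed
  with C(1) show ?thesis by blast
qed

lemma isCont_Phi_hyp2F1:
  assumes "m1 + m2 > 0" and "Im l > 0" and "t \<noteq> 0"
  shows "isCont (Phi_hyp2F1 m1 m2 l) t"
proof -
  obtain C where C: "\<And>n. norm (hyp2F1_coeff ((complex_of_real (rho m1 m2) - \<i> * l) / 2)
      (complex_of_real ((real m1 + 2) / 4) - \<i> * l / 2) (1 - \<i> * l) n)
        \<le> C * (pochhammer ((real m1 + real m2) / 2) n / fact n)"
    using Phi_hyp2F1_coeff_le[OF assms(1,2)] by blast
  show ?thesis
    unfolding Phi_hyp2F1_def[abs_def]
    by (intro isCont_o2[where f = "\<lambda>t. complex_of_real (1 / (cosh t)\<^sup>2)",
                         OF _ isCont_hyp2F1[OF C norm_inverse_cosh_square_less_1[OF assms(3)]]])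
       (auto intro!: continuous_intros)
qed

lemma norm_cosh_powr_Phi_exponent:
  "cmod (complex_of_real (2 * cosh t) powr (\<i> * l - complex_of_real (rho m1 m2)))
     = (2 * cosh t) powr (- (rho m1 m2 + Im l))"
  by (subst norm_powr_real_powr) (auto simp: algebra_simps)

lemma norm_b_rad_le:
  assumes "m1 + m2 > 0" and "Im l > 0"
  shows "\<exists>K\<ge>0. \<forall>t>0. cmod (b_rad m1 m2 l t)
                      \<le> K * (2 * cosh t) powr (- (rho m1 m2 + Im l)) / tanh t ^ (m1 + m2)"
proof -
  obtain C where C: "C \<ge> 0" "\<And>t. t > 0 \<Longrightarrow> norm (Phi_hyp2F1 m1 m2 l t) \<le> C / tanh t ^ (m1 + m2)"
    using norm_Phi_hyp2F1_le[OF assms] by blast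
  define c0 where "c0 = cmod (\<i> / (2 * l * cfun m1 m2 (- l)))"
  have c0: "c0 \<ge> 0" by (simp add: c0_def)
  have "cmod (b_rad m1 m2 l t) \<le> c0 * C * (2 * cosh t) powr (- (rho m1 m2 + Im l)) / tanh t ^ (m1 + m2)"
    if "t > 0" for t
    using mult_left_mono[OF mult_left_mono[OF C(2)[OF that], of "(2 * cosh t) powr (- (rho m1 m2 + Im l))"],
                         of c0]
    unfolding b_rad_eq norm_mult norm_cosh_powr_Phi_exponent c0_def[symmetric] using c0
    by (simp add: mult_ac)
  with C(1) c0 show ?thesis
    by (intro exI[of _ "c0 * C"]) auto
qed

lemma continuous_on_b_rad:
  assumes "m1 + m2 > 0" and "Im l > 0"
  shows "continuous_on {0<..} (b_rad m1 m2 l)"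
proof -
  have "isCont (b_rad m1 m2 l) t" if "t > 0" for t
  proof -
    have "isCont (\<lambda>t. complex_of_real (2 * cosh t) powr (\<i> * l - complex_of_real (rho m1 m2))) t"
      by (intro continuous_intros) (auto simp: complex_nonpos_Reals_iff)
    with isCont_Phi_hyp2F1[OF assms, of t] that show ?thesis
      unfolding b_rad_eq[abs_def] by (intro continuous_mult continuous_const) auto
  qed
  then show ?thesis
    by (intro continuous_at_imp_continuous_on) auto
qed

lemma Delta_mult_norm_b_rad_le:
  assumes "m1 + m2 > 0" and "Im l > 0"
  shows "\<exists>K\<ge>0. \<forall>t>0. Delta m1 m2 t * cmod (b_rad m1 m2 l t) \<le> K * (2 * cosh t) powr (rho m1 m2 - Im l)"
proof -
  obtain K where K: "K \<ge> 0" "\<And>t. t > 0 \<Longrightarrow> cmod (b_rad m1 m2 l t)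
                       \<le> K * (2 * cosh t) powr (- (rho m1 m2 + Im l)) / tanh t ^ (m1 + m2)"
    using norm_b_rad_le[OF assms] by blast
  have "Delta m1 m2 t * cmod (b_rad m1 m2 l t) \<le> K * (2 * cosh t) powr (rho m1 m2 - Im l)"
    if t: "t > 0" for t
  proof -
    have "Delta m1 m2 t * cmod (b_rad m1 m2 l t)
          \<le> (2 * cosh t) powr (2 * rho m1 m2) * tanh t ^ (m1 + m2) *
            (K * (2 * cosh t) powr (- (rho m1 m2 + Im l)) / tanh t ^ (m1 + m2))"
      unfolding Delta_eq_cosh_powr_mult_tanh_power using K(2)[OF t] t by (intro mult_left_mono) auto
    also have "\<dots> = K * ((2 * cosh t) powr (2 * rho m1 m2) * (2 * cosh t) powr (- (rho m1 m2 + Im l)))"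
      using t by simp
    also have "\<dots> = K * (2 * cosh t) powr (rho m1 m2 - Im l)"
      by (simp flip: powr_add)
    finally show ?thesis .
  qed
  with K(1) show ?thesis by blast
qed

lemma norm_b_rad_le_away_from_zero:
  assumes "m1 + m2 > 0" and "Im l > 0" and e: "e > 0"
  shows "\<exists>K\<ge>0. \<forall>t\<ge>e. cmod (b_rad m1 m2 l t) \<le> K * (2 * cosh t) powr (- (rho m1 m2 + Im l))"
proof -
  obtain K where K: "K \<ge> 0" "\<And>t. t > 0 \<Longrightarrow> cmod (b_rad m1 m2 l t)
                       \<le> K * (2 * cosh t) powr (- (rho m1 m2 + Im l)) / tanh t ^ (m1 + m2)"
    using norm_b_rad_le[OF assms(1,2)] by blast
  have "cmod (b_rad m1 m2 l t) \<le> K / tanh e ^ (m1 + m2) * (2 * cosh t) powr (- (rho m1 m2 + Im l))"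
    if te: "t \<ge> e" for t
  proof -
    have t: "t > 0" using te e by simp
    have "tanh e ^ (m1 + m2) \<le> tanh t ^ (m1 + m2)"
      using te e by (intro power_mono) auto
    then have "K * (2 * cosh t) powr (- (rho m1 m2 + Im l)) / tanh t ^ (m1 + m2)
               \<le> K * (2 * cosh t) powr (- (rho m1 m2 + Im l)) / tanh e ^ (m1 + m2)"
      using K(1) e t by (intro divide_left_mono) auto
    with K(2)[OF t] show ?thesis
      by simp
  qed
  with K(1) e show ?thesis
    by (intro exI[of _ "K / tanh e ^ (m1 + m2)"]) auto
qed

lemma Delta_mult_norm_b_rad_powr_le:
  assumes "m1 + m2 > 0" and "Im l > 0" and "e > 0" and p: "p \<ge> 0"
  shows "\<exists>K\<ge>0. \<forall>t\<ge>e. Delta m1 m2 t * cmod (b_rad m1 m2 l t) powr p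
                       \<le> K * (2 * cosh t) powr (2 * rho m1 m2 - p * (rho m1 m2 + Im l))"
proof -
  obtain K where K: "K \<ge> 0" "\<And>t. t \<ge> e \<Longrightarrow> cmod (b_rad m1 m2 l t) \<le> K * (2 * cosh t) powr (- (rho m1 m2 + Im l))"
    using norm_b_rad_le_away_from_zero[OF assms(1-3)] by blast
  have "Delta m1 m2 t * cmod (b_rad m1 m2 l t) powr p
          \<le> K powr p * (2 * cosh t) powr (2 * rho m1 m2 - p * (rho m1 m2 + Im l))"
    if te: "t \<ge> e" for t
  proof -
    have t: "t \<ge> 0" using te assms(3) by simp
    have "cmod (b_rad m1 m2 l t) powr p \<le> (K * (2 * cosh t) powr (- (rho m1 m2 + Im l))) powr p"
      using K(2)[OF te] by (intro powr_mono2 p) auto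
    also have "\<dots> = K powr p * (2 * cosh t) powr (- (rho m1 m2 + Im l) * p)"
      using K(1) by (simp only: powr_mult powr_ge_zero powr_powr)
    finally have "Delta m1 m2 t * cmod (b_rad m1 m2 l t) powr p
        \<le> (2 * cosh t) powr (2 * rho m1 m2) * (K powr p * (2 * cosh t) powr (- (rho m1 m2 + Im l) * p))"
      using Delta_le_cosh_powr[OF t] Delta_nonneg[OF t] by (intro mult_mono) auto
    also have "\<dots> = K powr p * (2 * cosh t) powr (2 * rho m1 m2 + - (rho m1 m2 + Im l) * p)"
      by (simp only: powr_add mult_ac)
    also have "2 * rho m1 m2 + - (rho m1 m2 + Im l) * p = 2 * rho m1 m2 - p * (rho m1 m2 + Im l)"
      by (simp add: algebra_simps)
    finally show ?thesis .
  qed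
  then show ?thesis
    by (intro exI[of _ "K powr p"]) auto
qed

lemma continuous_on_Delta_mult_norm_b_rad_powr:
  assumes "m1 + m2 > 0" and "Im l > 0" and "S \<subseteq> {0<..}" and "p > 0"
  shows "continuous_on S (\<lambda>t. Delta m1 m2 t * cmod (b_rad m1 m2 l t) powr p)"
proof -
  have "continuous_on S (\<lambda>t. cmod (b_rad m1 m2 l t))"
    using continuous_on_subset[OF continuous_on_b_rad[OF assms(1,2)] assms(3)]
    by (intro continuous_intros)
  then have "continuous_on S (\<lambda>t. cmod (b_rad m1 m2 l t) powr p)"
    using assms(4) by (intro continuous_on_powr' continuous_on_const) auto
  then show ?thesis
    by (intro continuous_on_mult continuous_on_Delta)
qed

lemma set_integrable_continuous_dominated:
  fixes g h :: "real \<Rightarrow> real"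
  assumes "set_integrable lborel S g" and "S \<in> sets borel" and "continuous_on S h"
    and "\<And>t. t \<in> S \<Longrightarrow> \<bar>h t\<bar> \<le> g t"
  shows "set_integrable lborel S h"
proof (rule set_integrable_bound[OF assms(1)])
  show "set_borel_measurable lborel S h"
    unfolding set_borel_measurable_def
    using borel_measurable_continuous_on_indicator[OF assms(2,3)] by simp
  show "AE t in lborel. t \<in> S \<longrightarrow> norm (h t) \<le> norm (g t)"
    using assms(4) by force
qed

lemma set_integrable_cosh_powr:
  fixes a :: real
  assumes "a < 0"
  shows "set_integrable lborel {0<..} (\<lambda>t. (2 * cosh t) powr a)"
proof (rule set_integrable_continuous_dominated[OF integrable_I0i_exp_mscale[of "- a"]])
  show "\<bar>(2 * cosh t) powr a\<bar> \<le> exp (- (t * - a))" for t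
  proof -
    have "exp t \<le> 2 * cosh t" by (simp add: cosh_def)
    then have "(2 * cosh t) powr a \<le> exp t powr a"
      using assms by (intro powr_mono2') auto
    then show ?thesis by (simp add: powr_def mult_ac)
  qed
qed (use assms in \<open>auto intro!: continuous_intros\<close>)

lemma b_rad_integrable_near_zero:
  assumes "m1 + m2 > 0" and "Im l > 0"
  shows "set_integrable lborel {0<..<1} (\<lambda>t. Delta m1 m2 t * cmod (b_rad m1 m2 l t))"
proof -
  obtain K where K: "\<And>t. t > 0 \<Longrightarrow> Delta m1 m2 t * cmod (b_rad m1 m2 l t) \<le> K * (2 * cosh t) powr (rho m1 m2 - Im l)"
    using Delta_mult_norm_b_rad_le[OF assms] by blast
  have "continuous_on {0..1} (\<lambda>t. K * (2 * cosh t) powr (rho m1 m2 - Im l))"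
    by (intro continuous_on_mult continuous_on_const continuous_on_powr continuous_on_cosh) auto
  then have "set_integrable lborel {0<..<1} (\<lambda>t. K * (2 * cosh t) powr (rho m1 m2 - Im l))"
    by (rule set_integrable_subset[OF borel_integrable_atLeastAtMost']) auto
  then show ?thesis
  proof (rule set_integrable_continuous_dominated)
    show "continuous_on {0<..<1} (\<lambda>t. Delta m1 m2 t * cmod (b_rad m1 m2 l t))"
    proof -
      have "{0<..<1} \<subseteq> {0::real<..}" by auto
      from continuous_on_Delta_mult_norm_b_rad_powr[OF assms this, of 1] show ?thesis by simp
    qed
    show "\<bar>Delta m1 m2 t * cmod (b_rad m1 m2 l t)\<bar> \<le> K * (2 * cosh t) powr (rho m1 m2 - Im l)"
      if "t \<in> {0<..<1}" for t
      using K[of t] Delta_nonneg[of t] that by simp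
  qed simp
qed

lemma b_rad_integrable:
  assumes "m1 + m2 > 0" and "Im l > rho m1 m2"
  shows "set_integrable lborel {0<..} (\<lambda>t. Delta m1 m2 t * cmod (b_rad m1 m2 l t))"
proof -
  have l: "Im l > 0"
    using assms(2) by (simp add: rho_def)
  obtain K where K: "\<And>t. t > 0 \<Longrightarrow> Delta m1 m2 t * cmod (b_rad m1 m2 l t) \<le> K * (2 * cosh t) powr (rho m1 m2 - Im l)"
    using Delta_mult_norm_b_rad_le[OF assms(1) l] by blast
  have "set_integrable lborel {0<..} (\<lambda>t. K * (2 * cosh t) powr (rho m1 m2 - Im l))"
    using set_integrable_cosh_powr[of "rho m1 m2 - Im l"] assms(2) by (simp add: set_integrable_mult_right)
  then show ?thesis
  proof (rule set_integrable_continuous_dominated)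
    show "continuous_on {0<..} (\<lambda>t. Delta m1 m2 t * cmod (b_rad m1 m2 l t))"
      using continuous_on_Delta_mult_norm_b_rad_powr[OF assms(1) l order_refl, of 1] by simp
    show "\<bar>Delta m1 m2 t * cmod (b_rad m1 m2 l t)\<bar> \<le> K * (2 * cosh t) powr (rho m1 m2 - Im l)"
      if "t \<in> {0<..}" for t
      using K[of t] Delta_nonneg[of t] that by simp
  qed simp
qed

lemma b_rad_powr_integrable_away_from_zero:
  assumes "m1 + m2 > 0" and "Im l > 0" and "e > 0" and "p > 0"
    and "2 * rho m1 m2 < p * (rho m1 m2 + Im l)"
  shows "set_integrable lborel {e..} (\<lambda>t. Delta m1 m2 t * cmod (b_rad m1 m2 l t) powr p)"
proof -
  obtain K where K: "\<And>t. t \<ge> e \<Longrightarrow> Delta m1 m2 t * cmod (b_rad m1 m2 l t) powr p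
                       \<le> K * (2 * cosh t) powr (2 * rho m1 m2 - p * (rho m1 m2 + Im l))"
    using Delta_mult_norm_b_rad_powr_le[OF assms(1-3) less_imp_le[OF assms(4)]] by blast
  have "set_integrable lborel {0<..} (\<lambda>t. K * (2 * cosh t) powr (2 * rho m1 m2 - p * (rho m1 m2 + Im l)))"
    using set_integrable_cosh_powr assms(5) by (simp add: set_integrable_mult_right)
  then have "set_integrable lborel {e..} (\<lambda>t. K * (2 * cosh t) powr (2 * rho m1 m2 - p * (rho m1 m2 + Im l)))"
    by (rule set_integrable_subset) (use assms(3) in auto)
  then show ?thesis
  proof (rule set_integrable_continuous_dominated)
    show "continuous_on {e..} (\<lambda>t. Delta m1 m2 t * cmod (b_rad m1 m2 l t) powr p)"
    proof -
      have "{e..} \<subseteq> {0<..}" using assms(3) by auto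
      from continuous_on_Delta_mult_norm_b_rad_powr[OF assms(1,2) this assms(4)] show ?thesis .
    qed
    show "\<bar>Delta m1 m2 t * cmod (b_rad m1 m2 l t) powr p\<bar>
            \<le> K * (2 * cosh t) powr (2 * rho m1 m2 - p * (rho m1 m2 + Im l))"
      if "t \<in> {e..}" for t
      using K[of t] Delta_nonneg[of t] that assms(3) by simp
  qed simp
qed

theorem lemma3p2:
  fixes m1 m2 :: nat
  assumes "rank_one_mult m1 m2"
  shows
    "(\<forall>l. Im l > 0 \<longrightarrow>
        (\<exists>\<epsilon>>0. set_integrable lborel {0<..<\<epsilon>}
                   (\<lambda>t. Delta m1 m2 t * cmod (b_rad m1 m2 l t))))
   \<and> (\<forall>l. Im l > rho m1 m2 \<longrightarrow>
        set_integrable lborel {0<..} (\<lambda>t. Delta m1 m2 t * cmod (b_rad m1 m2 l t)))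
   \<and> (\<forall>l. Im l > 0 \<longrightarrow> (\<forall>\<epsilon>>0.
        set_integrable lborel {\<epsilon>..} (\<lambda>t. Delta m1 m2 t * (cmod (b_rad m1 m2 l t))\<^sup>2)))
   \<and> (\<forall>l. Im l > 0 \<longrightarrow> (\<exists>p::real. 1 \<le> p \<and> p < 2 \<and> (\<forall>\<epsilon>>0.
        set_integrable lborel {\<epsilon>..} (\<lambda>t. Delta m1 m2 t * cmod (b_rad m1 m2 l t) powr p))))"
proof -
  have N: "m1 + m2 > 0"
    using assms by (auto simp: rank_one_mult_def)
  have rho: "rho m1 m2 \<ge> 0"
    by (simp add: rho_def)
  show ?thesis
  proof (intro conjI allI impI)
    fix l :: complex assume "Im l > 0"
    then show "\<exists>\<epsilon>>0. set_integrable lborel {0<..<\<epsilon>} (\<lambda>t. Delta m1 m2 t * cmod (b_rad m1 m2 l t))"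
      using b_rad_integrable_near_zero[OF N] by (intro exI[of _ 1]) auto
  next
    fix l :: complex assume "Im l > rho m1 m2"
    then show "set_integrable lborel {0<..} (\<lambda>t. Delta m1 m2 t * cmod (b_rad m1 m2 l t))"
      by (rule b_rad_integrable[OF N])
  next
    fix l :: complex and \<epsilon> :: real assume "Im l > 0" and "\<epsilon> > 0"
    then show "set_integrable lborel {\<epsilon>..} (\<lambda>t. Delta m1 m2 t * (cmod (b_rad m1 m2 l t))\<^sup>2)"
      using b_rad_powr_integrable_away_from_zero[OF N, of l \<epsilon> 2] by simp
  next
    fix l :: complex assume l: "Im l > 0"
    define p where "p = 1 + rho m1 m2 / (rho m1 m2 + Im l)"
    have pos: "rho m1 m2 + Im l > 0"
      using l rho by simp
    then have "p * (rho m1 m2 + Im l) = 2 * rho m1 m2 + Im l"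
      by (simp add: p_def field_simps)
    moreover have "1 \<le> p" "p < 2"
      using l rho pos by (simp_all add: p_def field_simps)
    ultimately have "1 \<le> p" "p < 2" "2 * rho m1 m2 < p * (rho m1 m2 + Im l)"
      using l by simp_all
    then show "\<exists>p::real. 1 \<le> p \<and> p < 2 \<and> (\<forall>\<epsilon>>0.
        set_integrable lborel {\<epsilon>..} (\<lambda>t. Delta m1 m2 t * cmod (b_rad m1 m2 l t) powr p))"
      using b_rad_powr_integrable_away_from_zero[OF N l] by (intro exI[of _ p]) auto
  qed
qed
end
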